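(* Let $\Lambda^*$ be a factorial language in $(\mathbb F_+^d)^N$. If $\Lambda^*$ is sofic, then $\Lambda^*$ coincides with the labeled path space $\{\mathfrak L(\lambda):\lambda\in\Lambda\}$ of its follower set graph $(\Lambda,\mathfrak L)$. Conversely, if $\Lambda^*$ coincides with the labeled path space of a labeled higher rank $N$-graph with finitely many vertices, then $\Lambda^*$ is sofic.
   Context: $\mathbb F_+^d$ is the free semigroup (words) on letters $[d]=\{1,\dots,d\}$ with empty word $\emptyset$. In $(\mathbb F_+^d)^N$: $\underline\mu*\underline\nu=(\mu_1\nu_1,\dots,\mu_N\nu_N)$; $|\underline\mu|=(|\mu_1|,\dots,|\mu_N|)\in\mathbb Z_+^N$; $\delta_i(k)$ is the element with the one-letter word $k$ in coordinate $i$ and $\emptyset$ elsewhere; $\underline\nu$ is a subword of $\underline\mu$ if $\underline\mu=\underline w*\underline\nu*\underline q$. A factorial language (FL) is $\Lambda^*\subseteq(\mathbb F_+^d)^N$ such that for every $i\in[N]$ some $\delta_i(k)\in\Lambda^*$, and subwords of elements of $\Lambda^*$ lie in $\Lambda^*$. For $\underline n\in\mathbb Z_+^N$, $\underline\mu\sim_{\underline n}\underline\nu$ iff $\{\underline w:\underline w*\underline\mu\in\Lambda^*,|\underline w|\le\underline n\}=\{\underline w:\underline w*\underline\nu\in\Lambda^*,|\underline w|\le\underline n\}$, and $\underline\mu\sim\underline\nu$ iff $\{\underline w:\underline w*\underline\mu\in\Lambda^*\}=\{\underline w:\underline w*\underline\nu\in\Lambda^*\}$ (on $\Lambda^*$);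 $\Omega=\Lambda^*/\sim$. $\Lambda^*$ is sofic if there is $\underline m$ with $\sim_{\underline n}=\sim$ for all $\underline n\ge\underline m$ (equivalently $\Omega$ finite). A higher rank $N$-graph: a countable small category $\Lambda$ with functor $d:\Lambda\to\mathbb Z_+^N$ with unique factorization (for $d(\lambda)=\underline m+\underline n$ unique $\lambda=\mu\nu$ with $d(\mu)=\underline m,d(\nu)=\underline n$); paths compose right to left, $\lambda\mu$ defined when $s(\lambda)=r(\mu)$. A labeled higher rank $N$-graph $(\Lambda,\mathfrak L)$: $\Lambda$ arises as the path category of a directed graph with edge set $E=E_1\cup\dots\cup E_N$ (colours) modulo an equivalence on paths, with $d$ counting edges of each colour; $\mathfrak L:E\to(\mathbb F_+^d)^N$ with $\mathfrak L(e)\in\{\delta_i(k):k\in[d]\}$ for $e\in E_i$, extended to paths by $\mathfrak L(e_1\cdots e_n)=\mathfrak L(e_1)*\cdots*\mathfrak L(e_n)$ (vertices labeled by $(\emptyset,\dots,\emptyset)$), and compatible with the equivalence, so $\mathfrak L$ is well-defined on $\Lambda$ with $|\mathfrak L(\lambda)|=d(\lambda)$. Its labeled path space is $\mathfrak L(\Lambda)$. The follower set graph of a sofic $\Lambda^*$: vertex set $\Omega$; for each $[\underline\mu]\in\Omega$ and $(i,k)$ with $\delta_i(k)*\underline\mu\in\Lambda^*$ an edge of colour $i$ labeled $\delta_i(k)$ with source $[\underline\mu]$ and range $[\delta_i(k)*\underline\mu]$; $\Lambda$ is the path category modulo the equivalence generated by $ef\sim f'e'$ whenever $\mathfrak L(e)*\mathfrak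 L(f)=\mathfrak L(f')*\mathfrak L(e')$ (this gives a labeled higher rank $N$-graph). *)

theory Defs
  imports Main "HOL-Library.Countable_Set"
begin

text \<open>An element of (F_+^d)^N is a function from coordinates to words (lists of letters),
  with letters in {1..d} in coordinates i < N and the empty word in coordinates i >= N.
  Coordinates are indexed 0..N-1.\<close>

type_synonym tword = "nat \<Rightarrow> nat list"

definition tuples :: "nat \<Rightarrow> nat \<Rightarrow> tword set" where
  "tuples d N = {\<mu>. (\<forall>i<N. set (\<mu> i) \<subseteq> {1..d}) \<and> (\<forall>i\<ge>N. \<mu> i = [])}"

definition tmul :: "tword \<Rightarrow> tword \<Rightarrow> tword" where
  "tmul \<mu> \<nu> = (\<lambda>i. \<mu> i @ \<nu> i)"

definition tempty :: tword where
  "tempty = (\<lambda>i. [])"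

definition tlen :: "tword \<Rightarrow> nat \<Rightarrow> nat" where
  "tlen \<mu> = (\<lambda>i. length (\<mu> i))"

definition delta :: "nat \<Rightarrow> nat \<Rightarrow> tword" where
  "delta i k = (\<lambda>j. if j = i then [k] else [])"

definition subword :: "nat \<Rightarrow> nat \<Rightarrow> tword \<Rightarrow> tword \<Rightarrow> bool" where
  "subword d N \<nu> \<mu> \<longleftrightarrow> (\<exists>w\<in>tuples d N. \<exists>q\<in>tuples d N. \<mu> = tmul (tmul w \<nu>) q)"

definition factorial_language :: "nat \<Rightarrow> nat \<Rightarrow> tword set \<Rightarrow> bool" where
  "factorial_language d N L \<longleftrightarrow>
     L \<subseteq> tuples d N \<and>
     (\<forall>i<N. \<exists>k\<in>{1..d}. delta i k \<in> L) \<and>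
     (\<forall>\<mu>\<in>L. \<forall>\<nu>\<in>tuples d N. subword d N \<nu> \<mu> \<longrightarrow> \<nu> \<in> L)"

definition follower_n :: "nat \<Rightarrow> nat \<Rightarrow> tword set \<Rightarrow> (nat \<Rightarrow> nat) \<Rightarrow> tword \<Rightarrow> tword set" where
  "follower_n d N L n \<mu> = {w\<in>tuples d N. tmul w \<mu> \<in> L \<and> (\<forall>i<N. tlen w i \<le> n i)}"

definition follower :: "nat \<Rightarrow> nat \<Rightarrow> tword set \<Rightarrow> tword \<Rightarrow> tword set" where
  "follower d N L \<mu> = {w\<in>tuples d N. tmul w \<mu> \<in> L}"

definition sim_n :: "nat \<Rightarrow> nat \<Rightarrow> tword set \<Rightarrow> (nat \<Rightarrow> nat) \<Rightarrow> tword \<Rightarrow> tword \<Rightarrow> bool" where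
  "sim_n d N L n \<mu> \<nu> \<longleftrightarrow> follower_n d N L n \<mu> = follower_n d N L n \<nu>"

definition sim :: "nat \<Rightarrow> nat \<Rightarrow> tword set \<Rightarrow> tword \<Rightarrow> tword \<Rightarrow> bool" where
  "sim d N L \<mu> \<nu> \<longleftrightarrow> follower d N L \<mu> = follower d N L \<nu>"

definition sofic :: "nat \<Rightarrow> nat \<Rightarrow> tword set \<Rightarrow> bool" where
  "sofic d N L \<longleftrightarrow> (\<exists>m. \<forall>n. (\<forall>i<N. m i \<le> n i) \<longrightarrow>
       (\<forall>\<mu>\<in>L. \<forall>\<nu>\<in>L. sim_n d N L n \<mu> \<nu> \<longleftrightarrow> sim d N L \<mu> \<nu>))"

definition fclass :: "nat \<Rightarrow> nat \<Rightarrow> tword set \<Rightarrow> tword \<Rightarrow> tword set" where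
  "fclass d N L \<mu> = {\<nu>\<in>L. sim d N L \<nu> \<mu>}"

definition Omega :: "nat \<Rightarrow> nat \<Rightarrow> tword set \<Rightarrow> tword set set" where
  "Omega d N L = fclass d N L ` L"

text \<open>An edge is a tuple (range, colour i, letter k, source). For each class [mu] and (i,k)
  with delta i k * mu in L there is exactly one edge of colour i labelled delta i k,
  with source [mu] and range [delta i k * mu] (well defined by the definition of ~).\<close>
type_synonym fedge = "tword set \<times> nat \<times> nat \<times> tword set"

definition fsg_edge :: "nat \<Rightarrow> nat \<Rightarrow> tword set \<Rightarrow> fedge \<Rightarrow> bool" where
  "fsg_edge d N L e \<longleftrightarrow> (case e of (R, i, k, S) \<Rightarrow>
     i < N \<and> k \<in> {1..d} \<and>
     (\<exists>\<mu>\<in>L. S = fclass d N L \<mu> \<and> tmul (delta i k) \<mu> \<in> L \<and>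
              R = fclass d N L (tmul (delta i k) \<mu>)))"

definition esrc :: "fedge \<Rightarrow> tword set" where
  "esrc e = (case e of (R, i, k, S) \<Rightarrow> S)"

definition erng :: "fedge \<Rightarrow> tword set" where
  "erng e = (case e of (R, i, k, S) \<Rightarrow> R)"

definition elabel :: "fedge \<Rightarrow> tword" where
  "elabel e = (case e of (R, i, k, S) \<Rightarrow> delta i k)"

text \<open>A path e_1 e_2 ... e_n (composed right to left): s(e_j) = r(e_(j+1)).\<close>
definition fsg_path :: "nat \<Rightarrow> nat \<Rightarrow> tword set \<Rightarrow> fedge list \<Rightarrow> bool" where
  "fsg_path d N L es \<longleftrightarrow> (\<forall>e\<in>set es. fsg_edge d N L e) \<and>
     successively (\<lambda>e f. esrc e = erng f) es"

definition path_label :: "fedge list \<Rightarrow> tword" where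
  "path_label es = foldr (\<lambda>e acc. tmul (elabel e) acc) es tempty"

text \<open>The equivalence on paths preserves labels, so the labels of
  morphisms of the quotient category are exactly these.\<close>
definition fsg_labeled_path_space :: "nat \<Rightarrow> nat \<Rightarrow> tword set \<Rightarrow> tword set" where
  "fsg_labeled_path_space d N L =
     {path_label es | es. es \<noteq> [] \<and> fsg_path d N L es} \<union> (\<lambda>_. tempty) ` Omega d N L"

text \<open>A higher rank N-graph: a countable small category with morphism set Mor, object set V
  (objects identified with their identity morphisms), source/range maps, composition
  cmp x y (= x y, defined when src x = rng y), and degree functor deg into Z_+^N
  (functions nat => nat vanishing outside [N]) with unique factorization.\<close>
definition higher_rank_graph ::
  "nat \<Rightarrow> 'a set \<Rightarrow> 'a set \<Rightarrow> ('a \<Rightarrow> 'a) \<Rightarrow> ('a \<Rightarrow> 'a) \<Rightarrow> ('a \<Rightarrow> 'a \<Rightarrow> 'a)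
     \<Rightarrow> ('a \<Rightarrow> nat \<Rightarrow> nat) \<Rightarrow> bool" where
  "higher_rank_graph N Mor V src rng cmp deg \<longleftrightarrow>
     countable Mor \<and> V \<subseteq> Mor \<and>
     (\<forall>x\<in>Mor. src x \<in> V \<and> rng x \<in> V) \<and>
     (\<forall>v\<in>V. src v = v \<and> rng v = v) \<and>
     (\<forall>x\<in>Mor. \<forall>y\<in>Mor. src x = rng y \<longrightarrow>
        cmp x y \<in> Mor \<and> src (cmp x y) = src y \<and> rng (cmp x y) = rng x) \<and>
     (\<forall>x\<in>Mor. cmp (rng x) x = x \<and> cmp x (src x) = x) \<and>
     (\<forall>x\<in>Mor. \<forall>y\<in>Mor. \<forall>z\<in>Mor. src x = rng y \<longrightarrow> src y = rng z \<longrightarrow>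
        cmp (cmp x y) z = cmp x (cmp y z)) \<and>
     (\<forall>x\<in>Mor. \<forall>i\<ge>N. deg x i = 0) \<and>
     (\<forall>v\<in>V. deg v = (\<lambda>_. 0)) \<and>
     (\<forall>x\<in>Mor. \<forall>y\<in>Mor. src x = rng y \<longrightarrow> deg (cmp x y) = (\<lambda>i. deg x i + deg y i)) \<and>
     (\<forall>x\<in>Mor. \<forall>m n. deg x = (\<lambda>i. m i + n i) \<longrightarrow>
        (\<exists>!p. fst p \<in> Mor \<and> snd p \<in> Mor \<and> src (fst p) = rng (snd p) \<and>
              x = cmp (fst p) (snd p) \<and> deg (fst p) = m \<and> deg (snd p) = n))"

text \<open>Since every morphism
  factors uniquely into edges (morphisms of degree e_i), this is the same as labeling each edge
  of colour i by some delta i k, extending multiplicatively to paths, compatibly with the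
  equivalence on paths; vertices get the empty label.\<close>
definition labeled_higher_rank_graph ::
  "nat \<Rightarrow> nat \<Rightarrow> 'a set \<Rightarrow> 'a set \<Rightarrow> ('a \<Rightarrow> 'a) \<Rightarrow> ('a \<Rightarrow> 'a) \<Rightarrow> ('a \<Rightarrow> 'a \<Rightarrow> 'a)
     \<Rightarrow> ('a \<Rightarrow> nat \<Rightarrow> nat) \<Rightarrow> ('a \<Rightarrow> tword) \<Rightarrow> bool" where
  "labeled_higher_rank_graph d N Mor V src rng cmp deg lab \<longleftrightarrow>
     higher_rank_graph N Mor V src rng cmp deg \<and>
     (\<forall>x\<in>Mor. lab x \<in> tuples d N \<and> tlen (lab x) = deg x) \<and>
     (\<forall>x\<in>Mor. \<forall>y\<in>Mor. src x = rng y \<longrightarrow> lab (cmp x y) = tmul (lab x) (lab y))"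

end

theory Submission
  imports Defs
begin

text \<open>Two follower sets that differ are already separated by one word. Hence, when there are
  only finitely many follower sets, a bound on the lengths of finitely many separating words
  makes \<open>\<sim>\<^sub>n\<close> coincide with \<open>\<sim>\<close>. In a labeled higher rank graph, unique factorization shows that
  the follower set of a label is determined by the set of ranges of the morphisms carrying it,
  so a finite vertex set gives finitely many follower sets. Conversely, in the follower set graph
  a path from \<open>[\<mu>]\<close> with label \<open>\<lambda>\<close> exists exactly when \<open>\<lambda>\<mu>\<close> is in the language, which identifies
  the language with the labels of paths.\<close>

lemma tmul_assoc: "tmul (tmul a b) c = tmul a (tmul b c)"
  by (simp add: tmul_def)

lemma tmul_tempty [simp]: "tmul tempty a = a" "tmul a tempty = a"
  by (simp_all add: tmul_def tempty_def)

lemma tmul_in_tuples: "a \<in> tuples d N \<Longrightarrow> b \<in> tuples d N \<Longrightarrow> tmul a b \<in> tuples d N"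
  by (auto simp: tuples_def tmul_def)

lemma tmul_in_tuplesD: "tmul a b \<in> tuples d N \<Longrightarrow> a \<in> tuples d N \<and> b \<in> tuples d N"
  by (auto simp: tuples_def tmul_def)

lemma tempty_in_tuples: "tempty \<in> tuples d N"
  by (simp add: tuples_def tempty_def)

lemma delta_in_tuples: "i < N \<Longrightarrow> k \<in> {1..d} \<Longrightarrow> delta i k \<in> tuples d N"
  by (auto simp: tuples_def delta_def)

lemma tmul_cancel:
  assumes "tmul a b = tmul a' b'" and "tlen a = tlen a'"
  shows "a = a' \<and> b = b'"
proof -
  have "a i = a' i \<and> b i = b' i" for i
  proof -
    have "a i @ b i = a' i @ b' i" using assms(1) by (metis tmul_def)
    moreover have "length (a i) = length (a' i)" using assms(2) by (metis tlen_def)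
    ultimately show ?thesis by simp
  qed
  then show ?thesis by auto
qed

lemma factorial_language_subset: "factorial_language d N L \<Longrightarrow> L \<subseteq> tuples d N"
  by (simp add: factorial_language_def)

lemma factorial_language_factors:
  assumes FL: "factorial_language d N L" and uv: "tmul u v \<in> L"
  shows "u \<in> L" and "v \<in> L"
proof -
  have T: "u \<in> tuples d N" "v \<in> tuples d N"
    using tmul_in_tuplesD factorial_language_subset[OF FL] uv by blast+
  have "subword d N u (tmul u v)" "subword d N v (tmul u v)"
    unfolding subword_def using T tempty_in_tuples by force+
  then show "u \<in> L" and "v \<in> L" using FL uv T by (auto simp: factorial_language_def)
qed

lemma factorial_language_tempty: "factorial_language d N L \<Longrightarrow> \<mu> \<in> L \<Longrightarrow> tempty \<in> L"
  using factorial_language_factors(1)[of d N L tempty \<mu>] by simp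

definition tsize :: "nat \<Rightarrow> tword \<Rightarrow> nat" where
  "tsize N \<mu> = (\<Sum>i<N. length (\<mu> i))"

lemma tsize_tmul_delta:
  assumes "i < N"
  shows "tsize N (tmul (delta i k) \<nu>) = Suc (tsize N \<nu>)"
proof -
  have "tsize N (tmul (delta i k) \<nu>) = (\<Sum>j<N. (if j = i then 1 else 0) + length (\<nu> j))"
    by (auto simp: tsize_def tmul_def delta_def intro!: sum.cong)
  also have "\<dots> = Suc (tsize N \<nu>)"
    using assms by (simp add: sum.distrib tsize_def)
  finally show ?thesis .
qed

lemma factorial_language_first_letter:
  assumes FL: "factorial_language d N L" and \<mu>: "\<mu> \<in> L" "\<mu> \<noteq> tempty"
  obtains i k \<nu> where "i < N" "k \<in> {1..d}" "\<nu> \<in> L" "\<mu> = tmul (delta i k) \<nu>"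
proof -
  have T: "\<mu> \<in> tuples d N" using FL \<mu> factorial_language_subset by blast
  obtain i where "\<mu> i \<noteq> []" using \<mu>(2) by (auto simp: tempty_def)
  then obtain k r where kr: "\<mu> i = k # r" by (cases "\<mu> i") auto
  have i: "i < N"
  proof (rule ccontr)
    assume "\<not> i < N"
    then have "\<mu> i = []" using T by (simp add: tuples_def)
    then show False using kr by simp
  qed
  have k: "k \<in> {1..d}" using T i kr by (auto simp: tuples_def)
  have eq: "\<mu> = tmul (delta i k) (\<mu>(i := r))" using kr by (auto simp: tmul_def delta_def)
  then have "\<mu>(i := r) \<in> L" using factorial_language_factors(2)[OF FL] \<mu>(1) by metis
  then show ?thesis using i k eq by (intro that)
qed

lemma follower_tmul:
  assumes "a \<in> tuples d N"
  shows "follower d N L (tmul a \<mu>) = {w \<in> tuples d N. tmul w a \<in> follower d N L \<mu>}"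
  using assms tmul_in_tuples by (auto simp: follower_def tmul_assoc)

lemma follower_tmul_cong:
  "a \<in> tuples d N \<Longrightarrow> follower d N L \<mu> = follower d N L \<mu>'
   \<Longrightarrow> follower d N L (tmul a \<mu>) = follower d N L (tmul a \<mu>')"
  by (simp add: follower_tmul)

lemma fclass_eq_iff: "\<mu> \<in> L \<Longrightarrow> \<mu> \<in> fclass d N L \<nu> \<longleftrightarrow> follower d N L \<mu> = follower d N L \<nu>"
  by (simp add: fclass_def sim_def)

lemma fclass_eqI: "follower d N L \<mu> = follower d N L \<nu> \<Longrightarrow> fclass d N L \<mu> = fclass d N L \<nu>"
  by (simp add: fclass_def sim_def)

lemma fsg_edge_step:
  assumes e: "fsg_edge d N L e" and \<mu>: "\<mu> \<in> L" and src: "esrc e = fclass d N L \<mu>"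
  shows "tmul (elabel e) \<mu> \<in> L \<and> erng e = fclass d N L (tmul (elabel e) \<mu>)"
proof -
  obtain R i k S where e_eq: "e = (R, i, k, S)" by (cases e)
  from e e_eq obtain \<mu>' where i: "i < N" and k: "k \<in> {1..d}" and S: "S = fclass d N L \<mu>'"
    and \<mu>': "tmul (delta i k) \<mu>' \<in> L" and R: "R = fclass d N L (tmul (delta i k) \<mu>')"
    by (auto simp: fsg_edge_def)
  have "\<mu> \<in> fclass d N L \<mu>'"
    using src S e_eq \<mu> fclass_eq_iff by (fastforce simp: esrc_def)
  then have F: "follower d N L \<mu> = follower d N L \<mu>'" using \<mu> fclass_eq_iff by blast
  have "delta i k \<in> follower d N L \<mu>'" using \<mu>' delta_in_tuples[OF i k] by (simp add: follower_def)
  then have "tmul (delta i k) \<mu> \<in> L" using F unfolding follower_def by blast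
  moreover have "R = fclass d N L (tmul (delta i k) \<mu>)"
    using R fclass_eqI[OF follower_tmul_cong[OF delta_in_tuples[OF i k] F]] by simp
  ultimately show ?thesis using e_eq by (simp add: elabel_def erng_def)
qed

lemma path_label_Cons [simp]: "path_label (e # es) = tmul (elabel e) (path_label es)"
  by (simp add: path_label_def)

lemma path_label_Nil [simp]: "path_label [] = tempty"
  by (simp add: path_label_def)

lemma fsg_path_Cons:
  "fsg_path d N L (e # es) \<longleftrightarrow>
     fsg_edge d N L e \<and> fsg_path d N L es \<and> (es \<noteq> [] \<longrightarrow> esrc e = erng (hd es))"
  by (cases es) (auto simp: fsg_path_def)

lemma fsg_path_label_tmul:
  assumes "fsg_path d N L es" and "\<mu> \<in> L" and "es \<noteq> [] \<longrightarrow> esrc (last es) = fclass d N L \<mu>"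
  shows "tmul (path_label es) \<mu> \<in> L \<and>
         (es \<noteq> [] \<longrightarrow> erng (hd es) = fclass d N L (tmul (path_label es) \<mu>))"
  using assms
proof (induction es)
  case Nil
  then show ?case by simp
next
  case (Cons e es)
  then have e: "fsg_edge d N L e" and es: "fsg_path d N L es" by (simp_all add: fsg_path_Cons)
  show ?case
  proof (cases "es = []")
    case True
    then show ?thesis using fsg_edge_step[OF e Cons.prems(2)] Cons.prems(3) by simp
  next
    case False
    with Cons.IH[OF es Cons.prems(2)] Cons.prems(3)
    have IH: "tmul (path_label es) \<mu> \<in> L" "erng (hd es) = fclass d N L (tmul (path_label es) \<mu>)"
      by auto
    moreover have "esrc e = erng (hd es)" using Cons.prems(1) False by (simp add: fsg_path_Cons)
    ultimately show ?thesis using fsg_edge_step[OF e IH(1)] by (simp add: tmul_assoc)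
  qed
qed

lemma fsg_path_label_in_language:
  assumes FL: "factorial_language d N L" and p: "fsg_path d N L es" and "es \<noteq> []"
  shows "path_label es \<in> L"
proof -
  have "fsg_edge d N L (last es)" using p \<open>es \<noteq> []\<close> by (simp add: fsg_path_def)
  then obtain \<mu> where "\<mu> \<in> L" and "esrc (last es) = fclass d N L \<mu>"
    by (auto simp: fsg_edge_def esrc_def split: prod.splits)
  then have "tmul (path_label es) \<mu> \<in> L" using fsg_path_label_tmul[OF p] by blast
  then show ?thesis by (rule factorial_language_factors(1)[OF FL])
qed

lemma fsg_path_of_word:
  assumes FL: "factorial_language d N L" and "\<mu> \<in> L"
  shows "\<exists>es. fsg_path d N L es \<and> path_label es = \<mu> \<and> (es \<noteq> [] \<longrightarrow> erng (hd es) = fclass d N L \<mu>)"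
  using \<open>\<mu> \<in> L\<close>
proof (induction "tsize N \<mu>" arbitrary: \<mu> rule: less_induct)
  case less
  show ?case
  proof (cases "\<mu> = tempty")
    case True
    then show ?thesis by (intro exI[of _ "[]"]) (simp add: fsg_path_def)
  next
    case False
    then obtain i k \<nu> where i: "i < N" and k: "k \<in> {1..d}" and \<nu>: "\<nu> \<in> L"
      and \<mu>_eq: "\<mu> = tmul (delta i k) \<nu>"
      using factorial_language_first_letter[OF FL less.prems] by blast
    then have "tsize N \<nu> < tsize N \<mu>" by (simp add: tsize_tmul_delta)
    then obtain es where es: "fsg_path d N L es" "path_label es = \<nu>"
      "es \<noteq> [] \<longrightarrow> erng (hd es) = fclass d N L \<nu>"
      using less.hyps \<nu> by blast
    define e where "e = (fclass d N L \<mu>, i, k, fclass d N L \<nu>)"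
    have "fsg_edge d N L e" unfolding e_def fsg_edge_def using i k \<nu> \<mu>_eq less.prems by auto
    then have "fsg_path d N L (e # es)" using es by (auto simp: fsg_path_Cons esrc_def e_def)
    moreover have "path_label (e # es) = \<mu>" using es(2) \<mu>_eq by (simp add: elabel_def e_def)
    ultimately show ?thesis by (intro exI[of _ "e # es"]) (simp add: e_def erng_def)
  qed
qed

lemma fsg_labeled_path_space_eq:
  assumes FL: "factorial_language d N L"
  shows "fsg_labeled_path_space d N L = L"
proof
  show "fsg_labeled_path_space d N L \<subseteq> L"
    using fsg_path_label_in_language[OF FL] factorial_language_tempty[OF FL]
    by (auto simp: fsg_labeled_path_space_def Omega_def)
next
  show "L \<subseteq> fsg_labeled_path_space d N L"
  proof
    fix \<mu> assume "\<mu> \<in> L"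
    then obtain es where "fsg_path d N L es" "path_label es = \<mu>"
      using fsg_path_of_word[OF FL] by blast
    then show "\<mu> \<in> fsg_labeled_path_space d N L"
      using \<open>\<mu> \<in> L\<close> by (cases "es = []") (auto simp: fsg_labeled_path_space_def Omega_def)
  qed
qed

lemma labeled_higher_rank_graph_factor:
  assumes G: "labeled_higher_rank_graph d N Mor V src rng cmp deg lab"
    and x: "x \<in> Mor" and lab_x: "lab x = tmul w \<mu>"
  obtains y z where "y \<in> Mor" "z \<in> Mor" "src y = rng z" "lab y = w" "lab z = \<mu>"
proof -
  have H: "higher_rank_graph N Mor V src rng cmp deg"
    and lab_deg: "\<forall>x\<in>Mor. tlen (lab x) = deg x"
    and lab_cmp: "\<forall>x\<in>Mor. \<forall>y\<in>Mor. src x = rng y \<longrightarrow> lab (cmp x y) = tmul (lab x) (lab y)"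
    using G by (auto simp: labeled_higher_rank_graph_def)
  have "deg x = tlen (lab x)" using lab_deg x by simp
  also have "\<dots> = (\<lambda>i. tlen w i + tlen \<mu> i)" using lab_x by (simp add: tlen_def tmul_def)
  finally have deg_x: "deg x = (\<lambda>i. tlen w i + tlen \<mu> i)" .
  have "\<forall>x\<in>Mor. \<forall>m n. deg x = (\<lambda>i. m i + n i) \<longrightarrow>
      (\<exists>!p. fst p \<in> Mor \<and> snd p \<in> Mor \<and> src (fst p) = rng (snd p) \<and>
            x = cmp (fst p) (snd p) \<and> deg (fst p) = m \<and> deg (snd p) = n)"
    using H unfolding higher_rank_graph_def by blast
  from this[rule_format, OF x deg_x] obtain y z where
    yz: "y \<in> Mor" "z \<in> Mor" "src y = rng z" "x = cmp y z" "deg y = tlen w"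
    by auto
  have "tmul (lab y) (lab z) = tmul w \<mu>" using lab_cmp yz lab_x by simp
  moreover have "tlen (lab y) = tlen w" using lab_deg yz by simp
  ultimately show ?thesis using that yz tmul_cancel by blast
qed

lemma follower_labeled_higher_rank_graph:
  assumes G: "labeled_higher_rank_graph d N Mor V src rng cmp deg lab"
  shows "follower d N (lab ` Mor) \<mu> =
     (\<Union>v \<in> rng ` {z\<in>Mor. lab z = \<mu>}. lab ` {y\<in>Mor. src y = v})"
proof (intro set_eqI iffI)
  fix w assume "w \<in> follower d N (lab ` Mor) \<mu>"
  then obtain x where "x \<in> Mor" "lab x = tmul w \<mu>" by (auto simp: follower_def)
  then show "w \<in> (\<Union>v \<in> rng ` {z\<in>Mor. lab z = \<mu>}. lab ` {y\<in>Mor. src y = v})"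
    by (rule labeled_higher_rank_graph_factor[OF G]) force
next
  fix w assume "w \<in> (\<Union>v \<in> rng ` {z\<in>Mor. lab z = \<mu>}. lab ` {y\<in>Mor. src y = v})"
  then obtain y z where yz: "y \<in> Mor" "z \<in> Mor" "src y = rng z" "lab y = w" "lab z = \<mu>"
    by blast
  then have "cmp y z \<in> Mor" "lab (cmp y z) = tmul w \<mu>" "w \<in> tuples d N"
    using G by (auto simp: labeled_higher_rank_graph_def higher_rank_graph_def)
  then show "w \<in> follower d N (lab ` Mor) \<mu>" by (force simp: follower_def)
qed

lemma finite_followers_labeled_higher_rank_graph:
  assumes G: "labeled_higher_rank_graph d N Mor V src rng cmp deg lab" and "finite V"
  shows "finite (range (follower d N (lab ` Mor)))"
proof -
  have "rng ` Mor \<subseteq> V"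
    using G by (auto simp: labeled_higher_rank_graph_def higher_rank_graph_def)
  then have "follower d N (lab ` Mor) \<mu> \<in> (\<lambda>S. \<Union>v\<in>S. lab ` {y\<in>Mor. src y = v}) ` Pow V"
    for \<mu>
    unfolding follower_labeled_higher_rank_graph[OF G] by blast
  then have "range (follower d N (lab ` Mor))
      \<subseteq> (\<lambda>S. \<Union>v\<in>S. lab ` {y\<in>Mor. src y = v}) ` Pow V"
    by blast
  then show ?thesis by (rule finite_subset) (simp add: \<open>finite V\<close>)
qed

lemma finite_family_bounded_separation:
  assumes "finite F"
  obtains m :: "nat \<Rightarrow> nat" where
    "\<And>A B. A \<in> F \<Longrightarrow> B \<in> F \<Longrightarrow> A \<noteq> B \<Longrightarrow> \<exists>w. (w \<in> A \<longleftrightarrow> w \<notin> B) \<and> (\<forall>i. tlen w i \<le> m i)"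
proof -
  have "\<forall>p\<in>F \<times> F. \<exists>w. fst p \<noteq> snd p \<longrightarrow> (w \<in> fst p \<longleftrightarrow> w \<notin> snd p)" by blast
  then obtain wit where wit: "\<And>p. p \<in> F \<times> F \<Longrightarrow> fst p \<noteq> snd p \<Longrightarrow> (wit p \<in> fst p \<longleftrightarrow> wit p \<notin> snd p)"
    by metis
  define m where "m i = Max ((\<lambda>p. tlen (wit p) i) ` (F \<times> F))" for i
  have "tlen (wit p) i \<le> m i" if "p \<in> F \<times> F" for p i
    unfolding m_def using \<open>finite F\<close> that by (intro Max_ge) auto
  then show ?thesis using wit by (intro that[of m]) (metis fst_conv mem_Sigma_iff snd_conv)
qed

lemma sofic_if_finite_followers:
  assumes "finite (range (follower d N L))"
  shows "sofic d N L"
proof -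
  obtain m where sep: "\<And>A B. A \<in> range (follower d N L) \<Longrightarrow> B \<in> range (follower d N L) \<Longrightarrow>
      A \<noteq> B \<Longrightarrow> \<exists>w. (w \<in> A \<longleftrightarrow> w \<notin> B) \<and> (\<forall>i. tlen w i \<le> m i)"
    using finite_family_bounded_separation[OF assms] by blast
  have "sim d N L \<mu> \<nu>" if n: "\<forall>i<N. m i \<le> n i" and "sim_n d N L n \<mu> \<nu>" for n \<mu> \<nu>
  proof (rule ccontr)
    assume "\<not> sim d N L \<mu> \<nu>"
    then obtain w where w: "w \<in> follower d N L \<mu> \<longleftrightarrow> w \<notin> follower d N L \<nu>"
      and "\<forall>i. tlen w i \<le> m i"
      using sep[of "follower d N L \<mu>" "follower d N L \<nu>"] by (auto simp: sim_def)
    then have "\<forall>i<N. tlen w i \<le> n i" using n order_trans by blast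
    then have "w \<in> follower_n d N L n \<mu> \<longleftrightarrow> w \<notin> follower_n d N L n \<nu>"
      using w by (auto simp: follower_def follower_n_def)
    then show False using \<open>sim_n d N L n \<mu> \<nu>\<close> by (auto simp: sim_n_def)
  qed
  moreover have "sim d N L \<mu> \<nu> \<Longrightarrow> sim_n d N L n \<mu> \<nu>" for n \<mu> \<nu>
    unfolding sim_def sim_n_def follower_def follower_n_def by blast
  ultimately show ?thesis unfolding sofic_def by blast
qed

theorem proposition9p7:
  fixes d N :: nat and L :: "tword set"
  assumes "factorial_language d N L"
  shows "(sofic d N L \<longrightarrow> L = fsg_labeled_path_space d N L) \<and>
         (\<forall>(Mor :: 'a set) V src rng cmp deg lab.
            labeled_higher_rank_graph d N Mor V src rng cmp deg lab \<and> finite V \<and>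
            L = lab ` Mor \<longrightarrow> sofic d N L)"
proof (intro conjI impI allI)
  text \<open>Soficity is only what makes the follower set graph finite; the identification of the
    labels holds for every factorial language.\<close>
  show "L = fsg_labeled_path_space d N L" using fsg_labeled_path_space_eq[OF assms] by simp
next
  fix Mor :: "'a set" and V src rng cmp deg lab
  assume G: "labeled_higher_rank_graph d N Mor V src rng cmp deg lab \<and> finite V \<and> L = lab ` Mor"
  then have "finite (range (follower d N (lab ` Mor)))"
    using finite_followers_labeled_higher_rank_graph by blast
  then show "sofic d N L" using G sofic_if_finite_followers by simp
qed

end
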